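(* Consider the Balancing with Conflicts game with $m=2$ machines. - If $n\ge4$, every strong Nash equilibrium $\vec s$ satisfies $c(\vec s)\le\left(\frac43+\frac{2}{3n}\right)c(\vec s^* )$. - If $n\le3$, every strong Nash equilibrium $\vec s$ satisfies $c(\vec s)=c(\vec s^* )$, i.e. the strong price of anarchy is $1$.
   Context: An instance of the Balancing with Conflicts (BwC) game consists of: - players $N=\{1,\dots,n\}$; - machines $M=\{1,\dots,m\}$; - a simple undirected graph $G=(N,E)$. A state is $\vec s\in M^n$, with $X_k(\vec s)=\{i:s_i=k\}$ and $x_k(\vec s)=|X_k(\vec s)|$. For $X\subseteq N$, $e(X)$ is the number of edges with both endpoints in $X$, and $e(\{i\},X)$ is the number of neighbours of $i$ in $X$. The cost of player $i$ with $s_i=k$ is $c_i(\vec s)=x_k(\vec s)+e(\{i\},X_k(\vec s))$. The social cost is $$c(\vec s)=\sum_ic_i(\vec s)=\sum_k\big(x_k(\vec s)^2+2e(X_k(\vec s))\big),$$ and $\vec s^*$ minimizes $c$. A state $\vec s$ is a strong Nash equilibrium if for every nonempty coalition $C\subseteq N$ and every joint deviation $\vec s_C'\in M^C$, some $i\in C$ has $c_i(\vec s)\le c_i(\vec s_C',\vec s_{-C})$. *)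

theory Defs
  imports Complex_Main "HOL-Library.FuncSet"
begin

definition simple_graph :: "nat \<Rightarrow> (nat \<Rightarrow> nat \<Rightarrow> bool) \<Rightarrow> bool" where
  "simple_graph n E \<longleftrightarrow> (\<forall>i<n. \<forall>j<n. E i j \<longleftrightarrow> E j i) \<and> (\<forall>i<n. \<not> E i i)"

definition states :: "nat \<Rightarrow> nat \<Rightarrow> (nat \<Rightarrow> nat) set" where
  "states n m = {..<n} \<rightarrow>\<^sub>E {..<m}"

definition load_set :: "nat \<Rightarrow> (nat \<Rightarrow> nat) \<Rightarrow> nat \<Rightarrow> nat set" where
  "load_set n s k = {i. i < n \<and> s i = k}"

definition player_cost :: "nat \<Rightarrow> (nat \<Rightarrow> nat \<Rightarrow> bool) \<Rightarrow> (nat \<Rightarrow> nat) \<Rightarrow> nat \<Rightarrow> nat" where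
  "player_cost n E s i =
     card (load_set n s (s i)) + card {j \<in> load_set n s (s i). E i j}"

definition social_cost :: "nat \<Rightarrow> (nat \<Rightarrow> nat \<Rightarrow> bool) \<Rightarrow> (nat \<Rightarrow> nat) \<Rightarrow> nat" where
  "social_cost n E s = (\<Sum>i<n. player_cost n E s i)"

definition opt_cost :: "nat \<Rightarrow> nat \<Rightarrow> (nat \<Rightarrow> nat \<Rightarrow> bool) \<Rightarrow> nat" where
  "opt_cost n m E = Min (social_cost n E ` states n m)"

definition strong_NE :: "nat \<Rightarrow> nat \<Rightarrow> (nat \<Rightarrow> nat \<Rightarrow> bool) \<Rightarrow> (nat \<Rightarrow> nat) \<Rightarrow> bool" where
  "strong_NE n m E s \<longleftrightarrow> s \<in> states n m \<and>
     (\<forall>C s'. C \<subseteq> {..<n} \<longrightarrow> C \<noteq> {} \<longrightarrow> s' \<in> states n m \<longrightarrow>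
        (\<forall>i. i < n \<longrightarrow> i \<notin> C \<longrightarrow> s' i = s i) \<longrightarrow>
        (\<exists>i\<in>C. player_cost n E s i \<le> player_cost n E s' i))"

end

theory Submission
  imports Defs
begin

text \<open>Let \<open>t\<close> be an optimum and let \<open>D\<close> be the set of players on which \<open>s\<close> and \<open>t\<close> differ.
  By strong stability some \<open>i \<in> D\<close> does not gain from the joint move of \<open>D\<close> to \<open>t\<close>;
  sending \<open>i\<close> back to \<open>s\<^sub>i\<close> changes the social cost by twice the change of \<open>i\<close>'s cost
  (potential argument), and repeating this with \<open>D - {i}\<close> gives
  \<open>c(s) \<le> c(t) + B(D) + |D|\<close>, where \<open>B = switch_bound s\<close> satisfies
  \<open>B(D) = 4ab - a\<^sup>2 - b\<^sup>2 \<le> |D|\<^sup>2/2\<close> for the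
  numbers \<open>a, b\<close> of players of \<open>D\<close> on the two machines in \<open>s\<close>.  Exchanging the machines
  in \<open>t\<close> we may assume \<open>|D| \<le> n/2\<close>; together with \<open>c(t) \<ge> n\<^sup>2/2\<close> this yields the
  bound, and for \<open>n \<le> 3\<close> we have \<open>|D| \<le> 1\<close> and \<open>B(D) + |D| \<le> 0\<close>.\<close>

definition pair_cost :: "(nat \<Rightarrow> nat \<Rightarrow> bool) \<Rightarrow> (nat \<Rightarrow> nat) \<Rightarrow> nat \<Rightarrow> nat \<Rightarrow> nat" where
  "pair_cost E s i j = (if s j = s i then (if E i j then 2 else 1) else 0)"

definition moved :: "nat \<Rightarrow> (nat \<Rightarrow> nat) \<Rightarrow> (nat \<Rightarrow> nat) \<Rightarrow> nat set" where
  "moved n s u = {j. j < n \<and> u j \<noteq> s j}"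

definition same_machine_pairs :: "(nat \<Rightarrow> nat) \<Rightarrow> nat set \<Rightarrow> nat" where
  "same_machine_pairs s D = (\<Sum>i\<in>D. card {j\<in>D. s j = s i})"

text \<open>With two machines, \<open>switch_weight s i j\<close> bounds the increase of the cost of \<open>i\<close>
  when \<open>j\<close> changes its machine.\<close>

definition switch_weight :: "(nat \<Rightarrow> nat) \<Rightarrow> nat \<Rightarrow> nat \<Rightarrow> int" where
  "switch_weight s i j = (if s i = s j then -1 else 2)"

definition switch_bound :: "(nat \<Rightarrow> nat) \<Rightarrow> nat set \<Rightarrow> int" where
  "switch_bound s D = (\<Sum>i\<in>D. \<Sum>j\<in>D. switch_weight s i j)"

lemma card_filter_lessThan: "card {j. j < (n::nat) \<and> P j} = (\<Sum>j<n. if P j then 1 else 0)"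
  by (simp add: sum.If_cases Int_def conj_commute)

lemma player_cost_eq_sum_pair_cost: "player_cost n E s i = (\<Sum>j<n. pair_cost E s i j)"
proof -
  have load: "card (load_set n s (s i)) = (\<Sum>j<n. if s j = s i then 1 else 0)"
    unfolding load_set_def by (rule card_filter_lessThan)
  have conflicts: "card {j \<in> load_set n s (s i). E i j} = (\<Sum>j<n. if s j = s i \<and> E i j then 1 else 0)"
    unfolding load_set_def using card_filter_lessThan[of n "\<lambda>j. s j = s i \<and> E i j"]
    by (simp add: conj_assoc)
  show ?thesis
    unfolding player_cost_def load conflicts sum.distrib[symmetric]
    by (rule sum.cong) (auto simp: pair_cost_def)
qed

lemma social_cost_eq_sum_pair_cost:
  "social_cost n E s = (\<Sum>i<n. \<Sum>j<n. pair_cost E s i j)"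
  unfolding social_cost_def player_cost_eq_sum_pair_cost ..

lemma social_cost_cong:
  "(\<And>i. i < n \<Longrightarrow> u i = v i) \<Longrightarrow> social_cost n E u = social_cost n E v"
  unfolding social_cost_eq_sum_pair_cost pair_cost_def by (intro sum.cong) auto

lemma states_less: "u \<in> states n m \<Longrightarrow> i < n \<Longrightarrow> u i < m"
  by (auto simp: states_def PiE_def Pi_def)

lemma states_fun_upd: "u \<in> states n m \<Longrightarrow> i < n \<Longrightarrow> k < m \<Longrightarrow> u(i := k) \<in> states n m"
  by (auto simp: states_def PiE_def Pi_def extensional_def)

lemma social_cost_diff_unilateral:
  assumes sym: "\<forall>i<n. \<forall>j<n. E i j \<longleftrightarrow> E j i" and "i < n"
    and uv: "\<And>j. j \<noteq> i \<Longrightarrow> u j = v j"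
  shows "int (social_cost n E u) - int (social_cost n E v)
       = 2 * (int (player_cost n E u i) - int (player_cost n E v i))"
proof -
  define d where "d j k = int (pair_cost E u j k) - int (pair_cost E v j k)" for j k
  have d_other: "d j k = 0" if "j \<noteq> i" "k \<noteq> i" for j k
    using uv that by (simp add: d_def pair_cost_def)
  have d_sym: "d j i = d i j" if "j < n" for j
    using sym \<open>i < n\<close> that by (auto simp: d_def pair_cost_def)
  have d_diag: "d i i = 0" by (simp add: d_def pair_cost_def)
  have row_other: "(\<Sum>k<n. d j k) = d j i" if "j \<noteq> i" for j
  proof -
    have "(\<Sum>k<n. d j k) = (\<Sum>k<n. if k = i then d j i else 0)"
      by (rule sum.cong) (auto simp: d_other that)
    also have "\<dots> = d j i" using \<open>i < n\<close> by simp
    finally show ?thesis .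
  qed
  have "int (social_cost n E u) - int (social_cost n E v) = (\<Sum>j<n. \<Sum>k<n. d j k)"
    unfolding social_cost_eq_sum_pair_cost d_def by (simp add: of_nat_sum sum_subtractf)
  also have "\<dots> = (\<Sum>k<n. d i k) + (\<Sum>j\<in>{..<n}-{i}. \<Sum>k<n. d j k)"
    using \<open>i < n\<close> by (intro sum.remove) auto
  also have "(\<Sum>j\<in>{..<n}-{i}. \<Sum>k<n. d j k) = d i i + (\<Sum>j\<in>{..<n}-{i}. d i j)"
    using d_diag by (auto simp: row_other d_sym intro: sum.cong)
  also have "\<dots> = (\<Sum>k<n. d i k)"
    using \<open>i < n\<close> by (intro sum.remove[symmetric]) auto
  also have "(\<Sum>k<n. d i k) = int (player_cost n E u i) - int (player_cost n E v i)"
    unfolding player_cost_eq_sum_pair_cost d_def by (simp add: of_nat_sum sum_subtractf)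
  finally show ?thesis by simp
qed

lemma player_cost_increase_le_switch_weights:
  assumes "u \<in> states n 2" "s \<in> states n 2" "i < n" "u i = s i"
  shows "int (player_cost n E u i) - int (player_cost n E s i)
         \<le> (\<Sum>j\<in>moved n s u. switch_weight s i j)"
proof -
  have "int (player_cost n E u i) - int (player_cost n E s i)
        = (\<Sum>j<n. int (pair_cost E u i j) - int (pair_cost E s i j))"
    by (simp add: player_cost_eq_sum_pair_cost of_nat_sum sum_subtractf)
  also have "\<dots> \<le> (\<Sum>j<n. if u j \<noteq> s j then switch_weight s i j else 0)"
  proof (rule sum_mono)
    fix j assume "j \<in> {..<n}"
    then have "u j < 2" "s j < 2" using assms states_less by auto
    then show "int (pair_cost E u i j) - int (pair_cost E s i j)
               \<le> (if u j \<noteq> s j then switch_weight s i j else 0)"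
      using \<open>u i = s i\<close> by (auto simp: pair_cost_def switch_weight_def)
  qed
  also have "\<dots> = (\<Sum>j\<in>moved n s u. switch_weight s i j)"
    unfolding moved_def by (simp add: sum.If_cases Int_def conj_commute)
  finally show ?thesis .
qed

lemma card_le_same_machine_pairs:
  assumes "finite D"
  shows "card D \<le> same_machine_pairs s D"
proof -
  have "card D = (\<Sum>i\<in>D. 1)" by simp
  also have "\<dots> \<le> same_machine_pairs s D"
    unfolding same_machine_pairs_def
  proof (rule sum_mono)
    fix i assume "i \<in> D"
    then have "{j\<in>D. s j = s i} \<noteq> {}" and "finite {j\<in>D. s j = s i}"
      using assms by auto
    then show "1 \<le> card {j\<in>D. s j = s i}"
      by (simp add: Suc_le_eq card_gt_0_iff)
  qed
  finally show ?thesis .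
qed

lemma card_sq_le_same_machine_pairs:
  assumes "finite D" and "\<forall>j\<in>D. s j < 2"
  shows "(card D)\<^sup>2 \<le> 2 * same_machine_pairs s D"
proof -
  define D0 where "D0 = {j\<in>D. s j = 0}"
  define D1 where "D1 = {j\<in>D. s j = 1}"
  have D_eq: "D = D0 \<union> D1" using assms(2) by (auto simp: D0_def D1_def)
  have disjoint: "D0 \<inter> D1 = {}" by (auto simp: D0_def D1_def)
  have finite: "finite D0" "finite D1" using assms(1) by (auto simp: D0_def D1_def)
  have "same_machine_pairs s D = (\<Sum>i\<in>D0 \<union> D1. card {j\<in>D. s j = s i})"
    by (simp only: same_machine_pairs_def flip: D_eq)
  also have "\<dots> = (\<Sum>i\<in>D0. card {j\<in>D. s j = s i}) + (\<Sum>i\<in>D1. card {j\<in>D. s j = s i})"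
    using finite disjoint by (rule sum.union_disjoint)
  also have "\<dots> = card D0 * card D0 + card D1 * card D1"
  proof -
    have "{j\<in>D. s j = s i} = D0" if "i \<in> D0" for i using that by (auto simp: D0_def)
    moreover have "{j\<in>D. s j = s i} = D1" if "i \<in> D1" for i using that by (auto simp: D1_def)
    ultimately show ?thesis by simp
  qed
  finally have pairs: "same_machine_pairs s D = card D0 * card D0 + card D1 * card D1" .
  have "card D = card D0 + card D1"
    unfolding D_eq using finite disjoint by (rule card_Un_disjoint)
  moreover have "(a + b)\<^sup>2 \<le> 2 * (a * a + b * b)" for a b :: nat
  proof -
    have "0 \<le> (int a - int b)\<^sup>2" by simp
    then have "int ((a + b)\<^sup>2) \<le> int (2 * (a * a + b * b))"
      by (simp add: power2_eq_square algebra_simps)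
    then show ?thesis by linarith
  qed
  ultimately show ?thesis unfolding pairs by simp
qed

lemma switch_bound_eq:
  assumes "finite D"
  shows "switch_bound s D = 2 * int (card D) ^ 2 - 3 * int (same_machine_pairs s D)"
proof -
  have row: "(\<Sum>j\<in>D. switch_weight s i j) = 2 * int (card D) - 3 * int (card {j\<in>D. s j = s i})" for i
  proof -
    have "(\<Sum>j\<in>D. switch_weight s i j) = (\<Sum>j\<in>D. 2 - 3 * (if s j = s i then 1 else 0))"
      by (rule sum.cong) (auto simp: switch_weight_def)
    also have "\<dots> = 2 * int (card D) - 3 * (\<Sum>j\<in>D. if s j = s i then 1 else 0)"
      by (simp add: sum_subtractf sum_distrib_left)
    also have "(\<Sum>j\<in>D. if s j = s i then 1 else 0) = int (card {j\<in>D. s j = s i})"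
      using assms by (simp add: sum.If_cases Int_def)
    finally show ?thesis .
  qed
  show ?thesis
    unfolding switch_bound_def same_machine_pairs_def row
    by (simp add: sum_subtractf sum_distrib_left of_nat_sum power2_eq_square)
qed

lemma switch_bound_le:
  assumes "finite D" and "\<forall>j\<in>D. s j < 2"
  shows "2 * switch_bound s D \<le> int (card D) ^ 2"
proof -
  have "int ((card D)\<^sup>2) \<le> int (2 * same_machine_pairs s D)"
    using card_sq_le_same_machine_pairs[OF assms] by (simp only: of_nat_le_iff)
  then show ?thesis using switch_bound_eq[OF assms(1)] by simp
qed

lemma switch_bound_add_card_nonpos:
  assumes "finite D" and "card D \<le> 1"
  shows "switch_bound s D + int (card D) \<le> 0"
proof -
  have "int (card D) ^ 2 = int (card D)"
    using assms(2) by (cases "card D") (auto simp: power2_eq_square)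
  then show ?thesis
    using switch_bound_eq[OF assms(1), of s] card_le_same_machine_pairs[OF assms(1), of s] by linarith
qed

lemma switch_bound_insert:
  assumes "finite D" and "i \<notin> D"
  shows "switch_bound s (insert i D) = switch_bound s D + 2 * (\<Sum>j\<in>D. switch_weight s i j) - 1"
proof -
  have "switch_bound s (insert i D)
      = switch_weight s i i + (\<Sum>j\<in>D. switch_weight s i j)
        + (\<Sum>k\<in>D. switch_weight s k i + (\<Sum>j\<in>D. switch_weight s k j))"
    unfolding switch_bound_def using assms by simp
  also have "(\<Sum>k\<in>D. switch_weight s k i + (\<Sum>j\<in>D. switch_weight s k j))
      = (\<Sum>j\<in>D. switch_weight s i j) + switch_bound s D"
    unfolding switch_bound_def sum.distrib by (simp add: switch_weight_def eq_commute)
  finally show ?thesis by (simp add: switch_weight_def)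
qed

lemma strong_NE_moved_not_improving:
  assumes "strong_NE n m E s" and "u \<in> states n m" and "moved n s u \<noteq> {}"
  obtains i where "i \<in> moved n s u" and "player_cost n E s i \<le> player_cost n E u i"
proof -
  have "\<exists>i\<in>moved n s u. player_cost n E s i \<le> player_cost n E u i"
    using assms(1)[unfolded strong_NE_def, THEN conjunct2, rule_format, of "moved n s u" u] assms(2,3)
    by (auto simp: moved_def)
  then show ?thesis using that by blast
qed

lemma strong_NE_social_cost_le:
  assumes sym: "\<forall>i<n. \<forall>j<n. E i j \<longleftrightarrow> E j i" and NE: "strong_NE n 2 E s"
    and "u \<in> states n 2"
  shows "int (social_cost n E s)
         \<le> int (social_cost n E u) + switch_bound s (moved n s u) + int (card (moved n s u))"
  using \<open>u \<in> states n 2\<close>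
proof (induction "card (moved n s u)" arbitrary: u)
  case 0
  then have no_moved: "moved n s u = {}" by (simp add: moved_def)
  then have "social_cost n E u = social_cost n E s"
    by (intro social_cost_cong) (auto simp: moved_def)
  with no_moved show ?case by (simp add: switch_bound_def)
next
  case (Suc N u)
  have s_state: "s \<in> states n 2" using NE by (simp add: strong_NE_def)
  have "moved n s u \<noteq> {}" using Suc.hyps(2) by auto
  then obtain i where i_moved: "i \<in> moved n s u"
    and i_not_better: "player_cost n E s i \<le> player_cost n E u i"
    using strong_NE_moved_not_improving[OF NE Suc.prems] by blast
  have "i < n" using i_moved by (simp add: moved_def)
  define u' where "u' = u(i := s i)"
  have u'_state: "u' \<in> states n 2"
    unfolding u'_def using Suc.prems \<open>i < n\<close> s_state by (simp add: states_fun_upd states_less)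
  have moved_u': "moved n s u' = moved n s u - {i}"
    by (auto simp: u'_def moved_def)
  have finite_moved: "finite (moved n s u)" by (simp add: moved_def)
  have card_rest: "card (moved n s u - {i}) = N"
    using Suc.hyps(2) i_moved finite_moved by simp
  have IH: "int (social_cost n E s)
      \<le> int (social_cost n E u') + switch_bound s (moved n s u - {i}) + int N"
    using Suc.hyps(1)[OF _ u'_state] card_rest by (simp add: moved_u')
  have potential: "int (social_cost n E u) - int (social_cost n E u')
      = 2 * (int (player_cost n E u i) - int (player_cost n E u' i))"
    by (rule social_cost_diff_unilateral[OF sym \<open>i < n\<close>]) (simp add: u'_def)
  have increase: "int (player_cost n E u' i) - int (player_cost n E s i)
      \<le> (\<Sum>j\<in>moved n s u - {i}. switch_weight s i j)"
    using player_cost_increase_le_switch_weights[OF u'_state s_state \<open>i < n\<close>]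
    by (simp add: u'_def moved_u'[unfolded u'_def])
  have "switch_bound s (moved n s u)
      = switch_bound s (moved n s u - {i}) + 2 * (\<Sum>j\<in>moved n s u - {i}. switch_weight s i j) - 1"
    using switch_bound_insert[of "moved n s u - {i}" i s] finite_moved i_moved
    by (simp add: insert_absorb)
  moreover have "int (card (moved n s u)) = int N + 1"
    using Suc.hyps(2) by simp
  moreover have "int (player_cost n E s i) \<le> int (player_cost n E u i)"
    using i_not_better by simp
  ultimately show ?case
    using IH potential increase by (smt (verit))
qed

definition swap_machines :: "nat \<Rightarrow> (nat \<Rightarrow> nat) \<Rightarrow> nat \<Rightarrow> nat" where
  "swap_machines n t = (\<lambda>i. if i < n then 1 - t i else undefined)"

lemma swap_machines_in_states: "swap_machines n t \<in> states n 2"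
  by (auto simp: swap_machines_def states_def PiE_def Pi_def extensional_def)

lemma social_cost_swap_machines:
  assumes "t \<in> states n 2"
  shows "social_cost n E (swap_machines n t) = social_cost n E t"
  unfolding social_cost_eq_sum_pair_cost
proof (intro sum.cong refl)
  fix i j assume "i \<in> {..<n}" "j \<in> {..<n}"
  moreover have "t i < 2" "t j < 2" using calculation assms states_less by auto
  ultimately show "pair_cost E (swap_machines n t) i j = pair_cost E t i j"
    by (auto simp: pair_cost_def swap_machines_def)
qed

lemma card_moved_swap_machines:
  assumes "s \<in> states n 2" and "t \<in> states n 2"
  shows "card (moved n s t) + card (moved n s (swap_machines n t)) = n"
proof -
  have "swap_machines n t i \<noteq> s i \<longleftrightarrow> t i = s i" if "i < n" for i
    using that states_less[OF assms(1) that] states_less[OF assms(2) that]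
    by (simp add: swap_machines_def) presburger
  then have "moved n s (swap_machines n t) = {..<n} - moved n s t"
    by (auto simp: moved_def)
  moreover have "moved n s t \<subseteq> {..<n}" by (auto simp: moved_def)
  moreover have "finite (moved n s t)" by (simp add: moved_def)
  ultimately show ?thesis
    using card_mono[of "{..<n}" "moved n s t"] by (simp add: card_Diff_subset)
qed

lemma strong_NE_two_machines_cost_le:
  assumes sym: "\<forall>i<n. \<forall>j<n. E i j \<longleftrightarrow> E j i" and NE: "strong_NE n 2 E s"
    and "t \<in> states n 2"
  obtains d where "2 * d \<le> n"
    and "2 * social_cost n E s \<le> 2 * social_cost n E t + d\<^sup>2 + 2 * d"
    and "d \<le> 1 \<Longrightarrow> social_cost n E s \<le> social_cost n E t"
proof -
  have s_state: "s \<in> states n 2" using NE by (simp add: strong_NE_def)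
  obtain t' where t': "t' \<in> states n 2" "social_cost n E t' = social_cost n E t"
    and close: "2 * card (moved n s t') \<le> n"
  proof (cases "2 * card (moved n s t) \<le> n")
    case True
    then show ?thesis using that \<open>t \<in> states n 2\<close> by blast
  next
    case False
    then show ?thesis
      using that[OF swap_machines_in_states social_cost_swap_machines[OF \<open>t \<in> states n 2\<close>]]
        card_moved_swap_machines[OF s_state \<open>t \<in> states n 2\<close>] by linarith
  qed
  define D where "D = moved n s t'"
  have D: "finite D" "\<forall>j\<in>D. s j < 2"
    using states_less[OF s_state] by (auto simp: D_def moved_def)
  have le: "int (social_cost n E s) \<le> int (social_cost n E t) + switch_bound s D + int (card D)"
    using strong_NE_social_cost_le[OF sym NE t'(1)] t'(2) by (simp add: D_def)
  show ?thesis
  proof (rule that)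
    show "2 * card D \<le> n" using close by (simp add: D_def)
    have "int (2 * social_cost n E s) \<le> int (2 * social_cost n E t + (card D)\<^sup>2 + 2 * card D)"
      using le switch_bound_le[OF D] by simp
    then show "2 * social_cost n E s \<le> 2 * social_cost n E t + (card D)\<^sup>2 + 2 * card D"
      by (simp only: of_nat_le_iff)
    show "social_cost n E s \<le> social_cost n E t" if "card D \<le> 1"
      using le switch_bound_add_card_nonpos[OF D(1) that, of s] by linarith
  qed
qed

lemma sq_le_twice_social_cost:
  assumes "t \<in> states n 2"
  shows "n\<^sup>2 \<le> 2 * social_cost n E t"
proof -
  have "n\<^sup>2 \<le> 2 * same_machine_pairs t {..<n}"
    using card_sq_le_same_machine_pairs[of "{..<n}" t] states_less[OF assms] by simp
  also have "same_machine_pairs t {..<n} \<le> social_cost n E t"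
    unfolding same_machine_pairs_def social_cost_def
  proof (rule sum_mono)
    fix i
    have "{j\<in>{..<n}. t j = t i} = load_set n t (t i)" by (auto simp: load_set_def)
    then show "card {j\<in>{..<n}. t j = t i} \<le> player_cost n E t i"
      by (simp add: player_cost_def)
  qed
  finally show ?thesis by simp
qed

lemma opt_cost_attained:
  assumes "m > 0"
  obtains t where "t \<in> states n m" and "social_cost n E t = opt_cost n m E"
proof -
  have "finite (states n m)" by (simp add: states_def finite_PiE)
  moreover have "(\<lambda>i. if i < n then 0 else undefined) \<in> states n m"
    using assms by (auto simp: states_def PiE_def Pi_def extensional_def)
  ultimately have "opt_cost n m E \<in> social_cost n E ` states n m"
    unfolding opt_cost_def by (intro Min_in) auto
  then obtain t where "t \<in> states n m" "opt_cost n m E = social_cost n E t" by blast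
  with that show ?thesis by simp
qed

lemma opt_cost_le: "s \<in> states n m \<Longrightarrow> opt_cost n m E \<le> social_cost n E s"
  unfolding opt_cost_def by (intro Min_le) (auto simp: states_def finite_PiE)

lemma price_of_anarchy_arith:
  fixes n d c c_opt :: nat
  assumes "4 \<le> n" and "2 * d \<le> n" and "2 * c \<le> 2 * c_opt + d\<^sup>2 + 2 * d"
    and "n\<^sup>2 \<le> 2 * c_opt"
  shows "real c \<le> (4/3 + 2 / (3 * real n)) * real c_opt"
proof -
  have "(2 * d)\<^sup>2 \<le> n\<^sup>2" using assms(2) by (rule power_mono) simp
  then have "8 * c \<le> 8 * c_opt + n\<^sup>2 + 4 * n"
    using assms(2,3) by (simp add: power_mult_distrib)
  then have "24 * n * c \<le> 3 * n * (8 * c_opt + n\<^sup>2 + 4 * n)"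
    using mult_le_mono2 by (simp add: mult.assoc)
  also have "\<dots> = 24 * n * c_opt + 3 * n ^ 3 + 12 * n\<^sup>2"
    by (simp add: algebra_simps power2_eq_square power3_eq_cube)
  also have "\<dots> \<le> 24 * n * c_opt + (4 * n + 8) * n\<^sup>2"
  proof -
    have "4 * n\<^sup>2 \<le> n * n\<^sup>2" using assms(1) by (rule mult_right_mono) simp
    then show ?thesis by (simp add: algebra_simps power3_eq_cube power2_eq_square)
  qed
  also have "\<dots> \<le> 24 * n * c_opt + (4 * n + 8) * (2 * c_opt)"
    using assms(4) by simp
  also have "\<dots> = 8 * ((4 * n + 2) * c_opt)"
    by (simp add: algebra_simps)
  finally have "real (3 * n * c) \<le> real ((4 * n + 2) * c_opt)"
    by (simp only: of_nat_le_iff)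
  then have "3 * real n * real c \<le> (4 * real n + 2) * real c_opt"
    by (simp add: algebra_simps)
  moreover have "real n > 0" using assms(1) by simp
  ultimately show ?thesis by (simp add: field_simps)
qed

theorem theorem14:
  fixes n :: nat and E :: "nat \<Rightarrow> nat \<Rightarrow> bool" and s :: "nat \<Rightarrow> nat"
  assumes "simple_graph n E"
    and "strong_NE n 2 E s"
  shows "(n \<ge> 4 \<longrightarrow>
            real (social_cost n E s) \<le> (4/3 + 2 / (3 * real n)) * real (opt_cost n 2 E))
       \<and> (n \<le> 3 \<longrightarrow> social_cost n E s = opt_cost n 2 E)"
proof -
  have sym: "\<forall>i<n. \<forall>j<n. E i j \<longleftrightarrow> E j i"
    using assms(1) by (simp add: simple_graph_def)
  obtain t where t: "t \<in> states n 2" and t_opt: "social_cost n E t = opt_cost n 2 E"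
    using opt_cost_attained[of 2] by auto
  obtain d where d: "2 * d \<le> n"
    and bound: "2 * social_cost n E s \<le> 2 * social_cost n E t + d\<^sup>2 + 2 * d"
    and small: "d \<le> 1 \<Longrightarrow> social_cost n E s \<le> social_cost n E t"
    using strong_NE_two_machines_cost_le[OF sym assms(2) t] by blast
  have opt_le: "opt_cost n 2 E \<le> social_cost n E s"
    using assms(2) by (simp add: strong_NE_def opt_cost_le)
  have "n \<ge> 4 \<longrightarrow>
      real (social_cost n E s) \<le> (4/3 + 2 / (3 * real n)) * real (opt_cost n 2 E)"
    using price_of_anarchy_arith[OF _ d bound sq_le_twice_social_cost[OF t]] t_opt by simp
  moreover have "n \<le> 3 \<longrightarrow> social_cost n E s = opt_cost n 2 E"
    using opt_le small d t_opt by linarith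
  ultimately show ?thesis ..
qed

end
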